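(* There is a constant $C$ (depending only on $r$) such that for all $N\ge1$, all $0<\delta<1/2$ and all $0<S\le\frac13N^{1-r}$, $$\sum_{k=1}^N P\Big(W_k\Big(\frac kN\Big)^r\ge\frac{(1+\delta)S}{N}\Big)\ge -C+g(S)\big(1-C\delta-Ce^{-S/2}\big),$$ where $g(S)=r\,\Gamma\!\big(\tfrac{2-r}{1-r}\big)\,N\,S^{-1/(1-r)}$.
   Context: Fix $r\in(0,1)$. $W_1,W_2,\dots$ are independent random variables with $W_1=1$ and, for $k\ge2$, $P(W_k>0)=r$ and, conditional on $W_k>0$, $W_k\sim\mathrm{Beta}(1,k-1)$. (These arise as $W_k=\lim_{N\to\infty}V_{k,N}$ in the multitype Yule process with new-type probability $r$, where $V_{k,N}$ is the fraction of type-$k$ individuals among those with type in $\{1,\dots,k\}$ when the population has size $N$.) *)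

theory Defs
  imports "HOL-Probability.Probability"
begin

definition beta1_density :: "nat \<Rightarrow> real \<Rightarrow> real" where
  "beta1_density k x = indicator {0..1} x * real (k - 1) * (1 - x) ^ (k - 2)"

definition beta1_measure :: "nat \<Rightarrow> real measure" where
  "beta1_measure k = density lborel (\<lambda>x. ennreal (beta1_density k x))"

text \<open>Law of W_k: W_1 = 1; for k \<ge> 2, W_k = 0 with probability 1 - r and,
  with probability r, W_k > 0 and W_k ~ Beta(1, k-1).
  W_prob r k A is P(W_k \<in> A) for a Borel set A.\<close>
definition W_prob :: "real \<Rightarrow> nat \<Rightarrow> real set \<Rightarrow> real" where
  "W_prob r k A = (if k = 1 then indicator A 1
                   else (1 - r) * indicator A 0 + r * measure (beta1_measure k) A)"

definition g_fun :: "real \<Rightarrow> nat \<Rightarrow> real \<Rightarrow> real" where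
  "g_fun r N S = r * Gamma ((2 - r) / (1 - r)) * real N * S powr (- 1 / (1 - r))"

end

theory Submission
  imports Defs
begin

(* For k \<ge> 2 the k-th probability is r (1 - b k^-r)^(k-1) with b = (1 + \<delta>) S N^(r-1) \<le> 1/2.
   Since (1 - x)^t \<ge> e^(-t x) (1 - 2 t x^2), on [k-1, k] this summand dominates
   exp (-b t^(1-r)) (1 - 2 b^2 t^(1-2r)); in the variable u = b t^(1-r) and with \<alpha> = 1/(1-r),
   comparing the sum with an integral gives
     sum \<ge> \<integral>_b^T (\<alpha> b^-\<alpha> u^(\<alpha>-1) - 2 \<alpha> u) e^-u du,   T = b N^(1-r) = (1 + \<delta>) S.
   The incomplete Gamma integral differs from \<Gamma>(\<alpha>) by at most b^\<alpha>/\<alpha> + O(e^(-T/2)), so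
   sum \<ge> \<Gamma>(\<alpha>+1) b^-\<alpha> - O(1) - O(b^-\<alpha> e^(-S/2)), and r \<Gamma>(\<alpha>+1) b^-\<alpha> = g(S) (1 + \<delta>)^-\<alpha> \<ge> g(S) (1 - \<alpha> \<delta>). *)

lemma measure_beta1_atLeast:
  assumes k: "k \<ge> 2" and c: "0 \<le> c" "c \<le> 1"
  shows "measure (beta1_measure k) {c..} = (1 - c) ^ (k - 1)"
proof -
  let ?h = "\<lambda>x::real. real (k - 1) * (1 - x) ^ (k - 2)"
  have deriv: "((\<lambda>x. - ((1 - x) ^ (k - 1))) has_vector_derivative ?h x) (at x within {c..1})" for x
  proof -
    have "k - 1 = Suc (k - 2)" using k by simp
    show ?thesis
      unfolding has_real_derivative_iff_has_vector_derivative[symmetric]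
      by (rule derivative_eq_intros refl)+ (use k \<open>k - 1 = Suc (k - 2)\<close> in simp)
  qed
  have integral: "(?h has_integral ((1 - c) ^ (k - 1))) {c..1}"
    using fundamental_theorem_of_calculus[OF c(2) deriv] k by (simp add: zero_power)
  have "emeasure (beta1_measure k) {c..} = (\<integral>\<^sup>+ x. ennreal (?h x) * indicator {c..1} x \<partial>lborel)"
    unfolding beta1_measure_def using c
    by (subst emeasure_density) (auto intro!: nn_integral_cong simp: beta1_density_def indicator_def)
  also have "\<dots> = ennreal ((1 - c) ^ (k - 1))"
    by (rule nn_integral_has_integral_lebesgue'[OF _ integral]) auto
  finally show ?thesis unfolding measure_def using c by simp
qed

lemma W_prob_threshold:
  assumes "k \<ge> 2" and "0 < x" and "0 < t" "t \<le> x"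
  shows "W_prob r k {w. t \<le> w * x} = r * (1 - t / x) ^ (k - 1)"
proof -
  have "{w. t \<le> w * x} = {t / x..}" using assms by (auto simp: pos_divide_le_eq)
  moreover have "t / x > 0" using assms by simp
  ultimately show ?thesis using assms by (simp add: W_prob_def measure_beta1_atLeast indicator_def not_le)
qed

lemma sum_W_prob_threshold_ge:
  assumes r: "0 \<le> r" and N: "N \<ge> 1" and \<tau>: "0 < \<tau>" "\<tau> * real N powr r \<le> 1"
  shows "r * (\<Sum>k=2..N. (1 - \<tau> * real N powr r * real k powr (- r)) ^ (k - 1))
           \<le> (\<Sum>k=1..N. W_prob r k {w. \<tau> \<le> w * (real k / real N) powr r})"
proof -
  let ?P = "\<lambda>k. W_prob r k {w. \<tau> \<le> w * (real k / real N) powr r}"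
  have summand: "?P k = r * (1 - \<tau> * real N powr r * real k powr (- r)) ^ (k - 1)" if k: "k \<in> {2..N}" for k
  proof -
    have "\<tau> / (real k / real N) powr r = \<tau> * real N powr r * real k powr (- r)"
      using k by (simp add: powr_divide powr_minus field_simps)
    moreover have "real k powr (- r) \<le> 1" using k r powr_mono[of "- r" 0 "real k"] by simp
    then have "\<tau> \<le> (real k / real N) powr r"
      using k \<tau> mult_left_le[of "real k powr (- r)" "\<tau> * real N powr r"]
      by (simp add: powr_divide powr_minus field_simps)
    ultimately show ?thesis using k \<tau> by (simp add: W_prob_threshold)
  qed
  have "(\<Sum>k=1..N. ?P k) = ?P 1 + (\<Sum>k=2..N. ?P k)"
    using N by (simp add: sum.atLeast_Suc_atMost numeral_2_eq_2)
  moreover have "?P 1 \<ge> 0" by (simp add: W_prob_def)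
  ultimately show ?thesis by (simp add: summand sum_distrib_left)
qed

lemma one_minus_powr_lower_bound:
  fixes x t :: real
  assumes x: "0 \<le> x" "x \<le> 1/2" and t: "0 \<le> t"
  shows "exp (- (t * x)) * (1 - 2 * t * x\<^sup>2) \<le> (1 - x) powr t"
proof -
  have "exp (- (t * x)) * (1 - 2 * t * x\<^sup>2) \<le> exp (- (t * x)) * exp (- (2 * t * x\<^sup>2))"
    using exp_ge_add_one_self[of "- (2 * t * x\<^sup>2)"] by (intro mult_left_mono) auto
  also have "\<dots> = exp (t * (- x - 2 * x\<^sup>2))"
    by (simp add: exp_add[symmetric] algebra_simps)
  also have "\<dots> \<le> exp (t * ln (1 - x))"
    using ln_one_minus_pos_lower_bound[OF x] t by (simp add: mult_left_mono)
  also have "\<dots> = (1 - x) powr t"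
    using x by (simp add: powr_def mult.commute)
  finally show ?thesis .
qed

lemma summand_lower_bound:
  fixes r b t :: real and k :: nat
  assumes r: "0 < r" and b: "0 < b" "b \<le> 1/2" and k: "k \<ge> 2" and t: "real (k - 1) \<le> t" "t \<le> real k"
  shows "exp (- (b * t powr (1 - r))) * (1 - 2 * b\<^sup>2 * t powr (1 - 2 * r))
           \<le> (1 - b * real k powr (- r)) ^ (k - 1)"
proof -
  define x where "x = b * t powr (- r)"
  have t1: "t \<ge> 1" using t k by linarith
  have "t powr (- r) \<le> 1" using t1 r powr_mono[of "- r" 0 t] by simp
  then have "x \<le> b" using b by (simp add: x_def mult_left_le)
  moreover have "0 \<le> x" using b by (simp add: x_def)
  ultimately have x: "0 \<le> x" "x \<le> 1/2" using b by linarith+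
  have "t powr (r * 2) = t powr r * t powr r"
    by (metis mult_2_right mult.commute powr_add)
  then have "b * t powr (1 - r) = t * x" "b\<^sup>2 * t powr (1 - 2 * r) = t * x\<^sup>2"
    using t1 by (simp_all add: x_def powr_diff powr_minus power2_eq_square powr_mult_base field_simps)
  then have "exp (- (b * t powr (1 - r))) * (1 - 2 * b\<^sup>2 * t powr (1 - 2 * r)) \<le> (1 - x) powr t"
    using one_minus_powr_lower_bound[of x t] x b t1 by (simp add: mult.assoc)
  also have "\<dots> \<le> (1 - x) powr real (k - 1)"
    using x b t by (intro powr_mono') auto
  also have "\<dots> = (1 - x) ^ (k - 1)"
    using x b by (simp add: powr_realpow)
  also have "\<dots> \<le> (1 - b * real k powr (- r)) ^ (k - 1)"
  proof -
    have "real k powr (- r) \<le> t powr (- r)" using t1 t r by (intro powr_mono2') auto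
    then show ?thesis using x b unfolding x_def by (intro power_mono) (auto intro: mult_left_mono)
  qed
  finally show ?thesis .
qed

lemma summand_lower_bound_rescaled:
  fixes r b u :: real and k :: nat
  defines "\<alpha> \<equiv> 1 / (1 - r)"
  assumes r: "0 < r" "r < 1" and b: "0 < b" "b \<le> 1/2" and k: "k \<ge> 2"
    and u: "b * real (k - 1) powr (1 - r) \<le> u" "u \<le> b * real k powr (1 - r)"
  shows "exp (- u) * (1 - 2 * b powr \<alpha> * u powr (2 - \<alpha>)) \<le> (1 - b * real k powr (- r)) ^ (k - 1)"
proof -
  have \<alpha>: "(1 - r) * \<alpha> = 1" "\<alpha> > 0" using r by (simp_all add: \<alpha>_def)
  have "b * real (k - 1) powr (1 - r) > 0" using b k by simp
  then have u_pos: "u > 0" using u(1) by linarith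
  define t where "t = (u / b) powr \<alpha>"
  have "real (k - 1) powr (1 - r) \<le> u / b" "u / b \<le> real k powr (1 - r)"
    using u b by (simp_all add: pos_le_divide_eq pos_divide_le_eq mult.commute)
  then have "(real (k - 1) powr (1 - r)) powr \<alpha> \<le> t" "t \<le> (real k powr (1 - r)) powr \<alpha>"
    unfolding t_def by (intro powr_mono2; use \<alpha> u_pos b in simp)+
  then have t: "real (k - 1) \<le> t" "t \<le> real k"
    using \<alpha> by (simp_all add: powr_powr)
  have t_pow: "t powr (1 - r) = u / b"
    using \<alpha> u_pos b by (simp add: t_def powr_powr mult.commute)
  have "1 - 2 * r = (1 - r) * (2 - \<alpha>)" using \<alpha>(1) by (simp add: algebra_simps)
  then have "t powr (1 - 2 * r) = (u / b) powr (2 - \<alpha>)"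
    by (simp only: powr_powr[of t, symmetric] t_pow)
  then have "b\<^sup>2 * t powr (1 - 2 * r) = b powr 2 * (u powr (2 - \<alpha>) / b powr (2 - \<alpha>))"
    using u_pos b by (simp add: powr_divide)
  also have "\<dots> = b powr \<alpha> * u powr (2 - \<alpha>)"
    using b by (simp add: powr_diff)
  finally show ?thesis
    using summand_lower_bound[OF r(1) b k t] b by (simp add: t_pow mult.assoc)
qed

(* In the variable u = b t^(1-r), i.e. t = (u/b)^a with a = 1/(1-r), this is the minorant of
   summand_lower_bound times dt/du. *)
definition summand_minorant :: "real \<Rightarrow> real \<Rightarrow> real \<Rightarrow> real" where
  "summand_minorant a b u = a * b powr (- a) * (u powr (a - 1) / exp u) - 2 * a * (u / exp u)"

lemma summand_minorant_eq:
  assumes "0 < b" "0 < u"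
  shows "summand_minorant a b u
           = a * b powr (- a) * u powr (a - 1) * (exp (- u) * (1 - 2 * b powr a * u powr (2 - a)))"
proof -
  have "b powr (- a) * b powr a = 1" "u powr (a - 1) * u powr (2 - a) = u"
    using assms by (simp_all add: powr_add[symmetric])
  then show ?thesis unfolding summand_minorant_def by (simp add: exp_minus field_simps)
qed

lemma has_integral_powr_interval:
  fixes x y a :: real
  assumes "0 < x" "x \<le> y" "a \<noteq> 0"
  shows "((\<lambda>u. u powr (a - 1)) has_integral ((y powr a - x powr a) / a)) {x..y}"
proof -
  have "((\<lambda>u. u powr a / a) has_vector_derivative u powr (a - 1)) (at u within {x..y})"
    if "u \<in> {x..y}" for u
    unfolding has_real_derivative_iff_has_vector_derivative[symmetric]
    using that assms by (auto intro!: derivative_eq_intros simp: powr_diff)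
  from fundamental_theorem_of_calculus[OF assms(2) this] show ?thesis
    by (simp add: diff_divide_distrib)
qed

lemma summand_minorant_integrable_on:
  assumes "0 < x"
  shows "summand_minorant a b integrable_on {x..y}"
  unfolding summand_minorant_def using assms
  by (intro integrable_continuous_interval continuous_intros) auto

lemma integral_summand_minorant:
  assumes "0 < x"
  shows "integral {x..y} (summand_minorant a b)
           = a * b powr (- a) * integral {x..y} (\<lambda>u. u powr (a - 1) / exp u)
             - 2 * a * integral {x..y} (\<lambda>u. u / exp u)"
proof -
  have "(\<lambda>u. u powr (a - 1) / exp u) integrable_on {x..y}" "(\<lambda>u. u / exp u) integrable_on {x..y}"
    using assms by (auto intro!: integrable_continuous_interval continuous_intros)
  then show ?thesis unfolding summand_minorant_def
    by (simp only: Henstock_Kurzweil_Integration.integral_diff integrable_on_mult_right integral_mult_right)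
qed

lemma integral_summand_minorant_le_summand:
  fixes r b :: real and k :: nat
  defines "\<alpha> \<equiv> 1 / (1 - r)"
  assumes r: "0 < r" "r < 1" and b: "0 < b" "b \<le> 1/2" and k: "k \<ge> 2"
  shows "integral {b * real (k - 1) powr (1 - r) .. b * real k powr (1 - r)} (summand_minorant \<alpha> b)
           \<le> (1 - b * real k powr (- r)) ^ (k - 1)"
    (is "integral {?x..?y} _ \<le> ?c")
proof -
  have \<alpha>: "(1 - r) * \<alpha> = 1" "\<alpha> > 0" using r by (simp_all add: \<alpha>_def)
  have x: "0 < ?x" "?x \<le> ?y" using b k r by (auto intro!: mult_left_mono powr_mono2)
  have "real k powr (- r) \<le> 1" using k r powr_mono[of "- r" 0 "real k"] by simp
  then have "b * real k powr (- r) \<le> b" using b by (simp add: mult_left_le)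
  then have "?c \<ge> 0" using b by (intro zero_le_power) linarith
  then have le: "summand_minorant \<alpha> b u \<le> ?c * (\<alpha> * b powr (- \<alpha>) * u powr (\<alpha> - 1))"
    if u: "u \<in> {?x..?y}" for u
  proof -
    have "summand_minorant \<alpha> b u
            = \<alpha> * b powr (- \<alpha>) * u powr (\<alpha> - 1) * (exp (- u) * (1 - 2 * b powr \<alpha> * u powr (2 - \<alpha>)))"
      using u x by (intro summand_minorant_eq b) auto
    also have "\<dots> \<le> \<alpha> * b powr (- \<alpha>) * u powr (\<alpha> - 1) * ?c"
      using summand_lower_bound_rescaled[OF r b k, of u] u \<alpha> unfolding \<alpha>_def
      by (intro mult_left_mono) auto
    finally show ?thesis by (simp only: mult.commute)
  qed
  txt \<open>\<alpha> b^-\<alpha> u^(\<alpha>-1) is dt/du for t = (u/b)^\<alpha>, so its integral over the piece is k - (k - 1) = 1: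
    the comparison needs no change of variables.\<close>
  have "?y powr \<alpha> = b powr \<alpha> * real k" "?x powr \<alpha> = b powr \<alpha> * real (k - 1)"
    using b k \<alpha> by (simp_all add: powr_mult powr_powr)
  then have "?y powr \<alpha> - ?x powr \<alpha> = b powr \<alpha>"
    using k by (simp add: of_nat_diff algebra_simps)
  then have "((\<lambda>u. u powr (\<alpha> - 1)) has_integral (b powr \<alpha> / \<alpha>)) {?x..?y}"
    using has_integral_powr_interval[OF x, of \<alpha>] \<alpha> by simp
  from has_integral_mult_right[OF this, of "?c * (\<alpha> * b powr (- \<alpha>))"]
  have "((\<lambda>u. ?c * (\<alpha> * b powr (- \<alpha>) * u powr (\<alpha> - 1))) has_integral ?c) {?x..?y}"
    using b \<alpha> by (simp add: powr_minus field_simps)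
  with le show ?thesis
    by (intro has_integral_le[OF integrable_integral[OF summand_minorant_integrable_on[OF x(1)]]])
qed

lemma integral_summand_minorant_le_sum:
  fixes r b :: real and n :: nat
  defines "\<alpha> \<equiv> 1 / (1 - r)"
  assumes r: "0 < r" "r < 1" and b: "0 < b" "b \<le> 1/2" and n: "n \<ge> 1"
  shows "integral {b .. b * real n powr (1 - r)} (summand_minorant \<alpha> b)
           \<le> (\<Sum>k=2..n. (1 - b * real k powr (- r)) ^ (k - 1))"
  using n
proof (induction n rule: dec_induct)
  case base
  then show ?case by simp
next
  case (step n)
  let ?y = "\<lambda>n. b * real n powr (1 - r)"
  have "b \<le> ?y n" "?y n \<le> ?y (Suc n)"
    using b r step(1) by (auto intro!: mult_left_mono powr_mono2 simp: ge_one_powr_ge_zero)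
  then have "integral {b .. ?y (Suc n)} (summand_minorant \<alpha> b)
        = integral {b .. ?y n} (summand_minorant \<alpha> b) + integral {?y n .. ?y (Suc n)} (summand_minorant \<alpha> b)"
    using b by (intro Henstock_Kurzweil_Integration.integral_combine[symmetric]
        summand_minorant_integrable_on) auto
  also have "\<dots> \<le> (\<Sum>k=2..n. (1 - b * real k powr (- r)) ^ (k - 1))
                  + (1 - b * real (Suc n) powr (- r)) ^ (Suc n - 1)"
    using step.IH integral_summand_minorant_le_summand[OF r b, of "Suc n"] step(1)
    by (intro add_mono) (auto simp: \<alpha>_def)
  also have "\<dots> = (\<Sum>k=2..Suc n. (1 - b * real k powr (- r)) ^ (k - 1))"
    using step(1) by (simp add: sum.cl_ivl_Suc)
  finally show ?case .
qed

lemma integral_div_exp_le_one: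
  fixes x y :: real
  assumes "0 \<le> x" "x \<le> y"
  shows "integral {x..y} (\<lambda>u. u / exp u) \<le> 1"
proof -
  have "((\<lambda>u. - ((1 + u) * exp (- u))) has_vector_derivative (u / exp u)) (at u within {x..y})" for u
    unfolding has_real_derivative_iff_has_vector_derivative[symmetric]
    by (rule derivative_eq_intros refl)+ (simp add: exp_minus field_simps)
  from integral_unique[OF fundamental_theorem_of_calculus[OF assms(2) this]]
  have "integral {x..y} (\<lambda>u. u / exp u) = (1 + x) * exp (- x) - (1 + y) * exp (- y)"
    by simp
  also have "\<dots> \<le> (1 + x) * exp (- x)" using assms by simp
  also have "\<dots> \<le> 1" using exp_ge_add_one_self[of x] by (simp add: exp_minus field_simps)
  finally show ?thesis .
qed

lemma powr_le_const_mult_exp_half: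
  fixes \<beta> :: real
  assumes "0 \<le> \<beta>"
  shows "\<exists>K>0. \<forall>t\<ge>0. t powr \<beta> \<le> K * exp (t / 2)"
proof -
  define m where "m = nat \<lceil>\<beta>\<rceil> + 1"
  have m: "m \<ge> 1" "\<beta> \<le> real m" using assms by (auto simp: m_def) linarith
  define K where "K = (2 * real m) ^ m + 1"
  have "t powr \<beta> \<le> K * exp (t / 2)" if t: "t \<ge> 0" for t
  proof (cases "t \<le> 1")
    case True
    then have "t powr \<beta> \<le> 1" using t assms by (intro powr_le1) auto
    also have "1 \<le> K * exp (t / 2)"
      using t mult_mono[of 1 K 1 "exp (t / 2)"] by (simp add: K_def)
    finally show ?thesis .
  next
    case False
    have "t powr \<beta> \<le> t ^ m" using False m by (simp add: powr_mono flip: powr_realpow)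
    also have "\<dots> = (2 * real m) ^ m * (t / (2 * real m)) ^ m" using m by (simp add: power_divide)
    also have "\<dots> \<le> (2 * real m) ^ m * exp (t / (2 * real m)) ^ m"
    proof -
      have "t / (2 * real m) \<le> exp (t / (2 * real m))"
        using exp_ge_add_one_self[of "t / (2 * real m)"] by linarith
      then show ?thesis using False by (intro mult_left_mono power_mono) auto
    qed
    also have "exp (t / (2 * real m)) ^ m = exp (t / 2)"
      using m by (simp add: exp_of_nat_mult[symmetric])
    also have "(2 * real m) ^ m * exp (t / 2) \<le> K * exp (t / 2)" by (simp add: K_def)
    finally show ?thesis .
  qed
  moreover have "K > 0" unfolding K_def by (simp add: add_nonneg_pos)
  ultimately show ?thesis by blast
qed

lemma Gamma_integrand_tail_le:
  fixes a :: real
  assumes "1 \<le> a"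
  obtains K where "0 \<le> K" and "\<And>T. 0 < T \<Longrightarrow> (\<lambda>t. t powr (a - 1) / exp t) integrable_on {T..}"
    and "\<And>T. 0 < T \<Longrightarrow> integral {T..} (\<lambda>t. t powr (a - 1) / exp t) \<le> K * exp (- T / 2)"
proof -
  obtain K where K: "K > 0" "\<And>t. t \<ge> 0 \<Longrightarrow> t powr (a - 1) \<le> K * exp (t / 2)"
    using powr_le_const_mult_exp_half[of "a - 1"] assms by auto
  have bound: "\<bar>t powr (a - 1) / exp t\<bar> \<le> K * exp (- (1/2) * t)" if "t \<ge> 0" for t
    using K(2)[OF that] by (simp add: divide_le_eq mult.assoc exp_add[symmetric])
  have dominant: "((\<lambda>t. K * exp (- (1/2) * t)) has_integral (2 * K * exp (- T / 2))) {T..}" for T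
    using has_integral_mult_right[OF has_integral_exp_minus_to_infinity[of "1/2" T], of K]
    by (simp add: mult_ac)
  have integrable: "(\<lambda>t. t powr (a - 1) / exp t) integrable_on {T..}" if T: "0 < T" for T
  proof (rule measurable_bounded_by_integrable_imp_integrable_real)
    show "(\<lambda>t. t powr (a - 1) / exp t) \<in> borel_measurable (lebesgue_on {T..})"
      using T by (intro continuous_imp_measurable_on_sets_lebesgue continuous_intros) auto
    show "(\<lambda>t. K * exp (- (1/2) * t)) integrable_on {T..}"
      using dominant by blast
  qed (use T bound in auto)
  show ?thesis
  proof
    show "0 \<le> 2 * K" using K(1) by simp
    show "integral {T..} (\<lambda>t. t powr (a - 1) / exp t) \<le> 2 * K * exp (- T / 2)" if "0 < T" for T
      using that bound by (intro has_integral_le[OF integrable_integral[OF integrable] dominant]) auto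
  qed (fact integrable)
qed

lemma Gamma_le_incomplete_Gamma_plus_tail:
  fixes a :: real
  assumes a: "1 \<le> a"
  obtains K where "0 \<le> K" and "\<And>b T. 0 < b \<Longrightarrow> b \<le> T \<Longrightarrow>
    Gamma a \<le> b powr a / a + integral {b..T} (\<lambda>t. t powr (a - 1) / exp t) + K * exp (- T / 2)"
proof -
  let ?G = "\<lambda>t::real. t powr (a - 1) / exp t"
  obtain K where "0 \<le> K" and tail_integrable: "\<And>T. 0 < T \<Longrightarrow> ?G integrable_on {T..}"
    and tail_le: "\<And>T. 0 < T \<Longrightarrow> integral {T..} ?G \<le> K * exp (- T / 2)"
    using Gamma_integrand_tail_le[OF a] by blast
  have "Gamma a \<le> b powr a / a + integral {b..T} ?G + K * exp (- T / 2)" if b: "0 < b" "b \<le> T" for b T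
  proof -
    have Gamma: "(?G has_integral Gamma a) {0..}" using Gamma_integral_real a by simp
    then have "?G integrable_on {0..}" by blast
    then have "?G integrable_on {0..T}" by (rule integrable_on_subinterval) auto
    moreover have "{0..} = {0..T} \<union> {T..}" "{0..T} \<inter> {T..} = {T}" using b by auto
    ultimately have "Gamma a = integral {0..T} ?G + integral {T..} ?G"
      using integral_unique[OF Gamma] tail_integrable[of T] b by simp
    also have "integral {0..T} ?G = integral {0..b} ?G + integral {b..T} ?G"
      using \<open>?G integrable_on {0..T}\<close> b
      by (intro Henstock_Kurzweil_Integration.integral_combine[symmetric]) auto
    also have "integral {0..b} ?G \<le> b powr a / a"
    proof (rule has_integral_le)
      show "(?G has_integral integral {0..b} ?G) {0..b}"
        using integrable_on_subinterval[OF \<open>?G integrable_on {0..T}\<close>, of 0 b] b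
        by (intro integrable_integral) auto
      show "((\<lambda>t. t powr (a - 1)) has_integral b powr a / a) {0..b}"
        using has_integral_powr_from_0[of "a - 1" b] a b by simp
      show "?G t \<le> t powr (a - 1)" if "t \<in> {0..b}" for t
        using that mult_left_mono[of 1 "exp t" "t powr (a - 1)"] by (simp add: divide_le_eq)
    qed
    finally show ?thesis using tail_le[of T] b by linarith
  qed
  with \<open>0 \<le> K\<close> show ?thesis using that by blast
qed

lemma sum_summands_lower_bound:
  fixes r :: real
  defines "\<alpha> \<equiv> 1 / (1 - r)"
  assumes r: "0 < r" "r < 1"
  obtains K where "0 \<le> K" and "\<And>b N. 0 < b \<Longrightarrow> b \<le> 1/2 \<Longrightarrow> N \<ge> 1 \<Longrightarrow>
    Gamma (\<alpha> + 1) * b powr (- \<alpha>) - (1 + 2 * \<alpha>) - \<alpha> * K * b powr (- \<alpha>) * exp (- (b * real N powr (1 - r)) / 2)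
      \<le> (\<Sum>k=2..N. (1 - b * real k powr (- r)) ^ (k - 1))"
proof -
  have \<alpha>: "1 < \<alpha>" using r by (simp add: \<alpha>_def)
  let ?G = "\<lambda>t::real. t powr (\<alpha> - 1) / exp t"
  obtain K where "0 \<le> K" and K: "\<And>b T. 0 < b \<Longrightarrow> b \<le> T \<Longrightarrow>
      Gamma \<alpha> \<le> b powr \<alpha> / \<alpha> + integral {b..T} ?G + K * exp (- T / 2)"
    using Gamma_le_incomplete_Gamma_plus_tail[of \<alpha>] \<alpha> by auto
  have "Gamma (\<alpha> + 1) * b powr (- \<alpha>) - (1 + 2 * \<alpha>) - \<alpha> * K * b powr (- \<alpha>) * exp (- T / 2)
          \<le> (\<Sum>k=2..N. (1 - b * real k powr (- r)) ^ (k - 1))"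
    if b: "0 < b" "b \<le> 1/2" and N: "N \<ge> 1" and T: "T = b * real N powr (1 - r)" for b N T
  proof -
    have "b \<le> T" using b r N by (simp add: T ge_one_powr_ge_zero)
    have "Gamma (\<alpha> + 1) = \<alpha> * Gamma \<alpha>"
      using \<alpha> by (intro Gamma_plus1) (auto elim!: nonpos_Ints_cases)
    moreover have "b powr (- \<alpha>) * b powr \<alpha> = 1" using b by (simp add: powr_minus)
    ultimately have "Gamma (\<alpha> + 1) * b powr (- \<alpha>) - (1 + 2 * \<alpha>) - \<alpha> * K * b powr (- \<alpha>) * exp (- T / 2)
        = \<alpha> * b powr (- \<alpha>) * (Gamma \<alpha> - b powr \<alpha> / \<alpha> - K * exp (- T / 2)) - 2 * \<alpha>"
      using \<alpha> by (simp add: field_simps)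
    also have "\<dots> \<le> \<alpha> * b powr (- \<alpha>) * integral {b..T} ?G - 2 * \<alpha> * integral {b..T} (\<lambda>u. u / exp u)"
    proof -
      have "Gamma \<alpha> - b powr \<alpha> / \<alpha> - K * exp (- T / 2) \<le> integral {b..T} ?G"
        using K[OF b(1) \<open>b \<le> T\<close>] by linarith
      then have "\<alpha> * b powr (- \<alpha>) * (Gamma \<alpha> - b powr \<alpha> / \<alpha> - K * exp (- T / 2))
          \<le> \<alpha> * b powr (- \<alpha>) * integral {b..T} ?G"
        using \<alpha> by (intro mult_left_mono) auto
      moreover have "2 * \<alpha> * integral {b..T} (\<lambda>u. u / exp u) \<le> 2 * \<alpha>"
        using integral_div_exp_le_one[of b T] b \<open>b \<le> T\<close> \<alpha> by simp
      ultimately show ?thesis by linarith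
    qed
    also have "\<dots> = integral {b..T} (summand_minorant \<alpha> b)"
      using b by (simp add: integral_summand_minorant)
    also have "\<dots> \<le> (\<Sum>k=2..N. (1 - b * real k powr (- r)) ^ (k - 1))"
      using integral_summand_minorant_le_sum[OF r b N] by (simp add: T \<alpha>_def)
    finally show ?thesis .
  qed
  with \<open>0 \<le> K\<close> show ?thesis using that by blast
qed

lemma one_minus_mult_le_powr_neg:
  fixes \<alpha> \<delta> :: real
  assumes "0 \<le> \<alpha>" "- 1 < \<delta>"
  shows "1 - \<alpha> * \<delta> \<le> (1 + \<delta>) powr (- \<alpha>)"
proof -
  have "1 - \<alpha> * \<delta> \<le> 1 + (- \<alpha> * ln (1 + \<delta>))"
    using ln_add_one_self_le_self2[of \<delta>] assms mult_left_mono[of "ln (1 + \<delta>)" \<delta> \<alpha>] by simp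
  also have "\<dots> \<le> exp (- \<alpha> * ln (1 + \<delta>))" by (rule exp_ge_add_one_self)
  also have "\<dots> = (1 + \<delta>) powr (- \<alpha>)" using assms by (simp add: powr_def)
  finally show ?thesis .
qed

lemma g_fun_mult_powr:
  fixes r c S :: real
  defines "\<alpha> \<equiv> 1 / (1 - r)"
  assumes r: "r < 1" and N: "N \<ge> 1" and "0 < c" "0 < S"
  shows "r * Gamma (\<alpha> + 1) * (c * S * real N powr (r - 1)) powr (- \<alpha>) = g_fun r N S * c powr (- \<alpha>)"
proof -
  have "(2 - r) / (1 - r) = \<alpha> + 1" "- 1 / (1 - r) = - \<alpha>" "(r - 1) * - \<alpha> = 1"
    using r by (simp_all add: \<alpha>_def field_simps)
  then show ?thesis
    using assms by (simp add: g_fun_def powr_mult powr_powr mult_ac)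
qed

lemma threshold_scale:
  fixes r \<delta> S :: real and N :: nat
  defines "b \<equiv> (1 + \<delta>) * S * real N powr (r - 1)"
  assumes N: "N \<ge> 1" and \<delta>: "0 < \<delta>" "\<delta> < 1/2" and S: "0 < S" "S \<le> (1/3) * real N powr (1 - r)"
  shows "0 < b" "b \<le> 1/2" "(1 + \<delta>) * S / real N * real N powr r = b"
    "b * real N powr (1 - r) = (1 + \<delta>) * S"
proof -
  have N_powr: "real N powr (1 - r) * real N powr (r - 1) = 1"
    using N by (simp add: powr_add[symmetric])
  have "b \<le> (1 + \<delta>) * ((1/3) * real N powr (1 - r)) * real N powr (r - 1)"
    unfolding b_def using \<delta> S by (intro mult_right_mono mult_left_mono) auto
  also have "\<dots> = (1 + \<delta>) / 3" using N_powr by (simp add: field_simps)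
  finally show "b \<le> 1/2" using \<delta> by simp
  show "0 < b" using \<delta> S N by (simp add: b_def)
  show "(1 + \<delta>) * S / real N * real N powr r = b" "b * real N powr (1 - r) = (1 + \<delta>) * S"
    using N N_powr by (auto simp: b_def powr_diff field_simps)
qed

lemma sum_W_prob_lower_bound:
  fixes r K \<delta> S :: real and N :: nat
  defines "\<alpha> \<equiv> 1 / (1 - r)"
  assumes r: "0 < r" "r < 1" and "0 \<le> K"
    and K: "\<And>b N. 0 < b \<Longrightarrow> b \<le> 1/2 \<Longrightarrow> N \<ge> 1 \<Longrightarrow>
      Gamma (\<alpha> + 1) * b powr (- \<alpha>) - (1 + 2 * \<alpha>) - \<alpha> * K * b powr (- \<alpha>) * exp (- (b * real N powr (1 - r)) / 2)
        \<le> (\<Sum>k=2..N. (1 - b * real k powr (- r)) ^ (k - 1))"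
    and N: "N \<ge> 1" and \<delta>: "0 < \<delta>" "\<delta> < 1/2" and S: "0 < S" "S \<le> (1/3) * real N powr (1 - r)"
  shows "g_fun r N S * (1 - \<alpha> * \<delta>) - r * (1 + 2 * \<alpha>) - \<alpha> * K / Gamma (\<alpha> + 1) * g_fun r N S * exp (- S / 2)
           \<le> (\<Sum>k=1..N. W_prob r k {w. (1 + \<delta>) * S / real N \<le> w * (real k / real N) powr r})"
    (is "_ \<le> ?W")
proof -
  define b where "b = (1 + \<delta>) * S * real N powr (r - 1)"
  define g where "g = g_fun r N S"
  define D where "D = (1 + \<delta>) powr (- \<alpha>)"
  define E where "E = exp (- ((1 + \<delta>) * S) / 2)"
  define \<kappa> where "\<kappa> = \<alpha> * K / Gamma (\<alpha> + 1)"
  note b = threshold_scale[OF N \<delta> S, folded b_def]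
  have "\<alpha> > 0" using r by (simp add: \<alpha>_def)
  then have "Gamma (\<alpha> + 1) > 0" by (intro Gamma_real_pos) simp
  have "r * (Gamma (\<alpha> + 1) * b powr (- \<alpha>) - (1 + 2 * \<alpha>) - \<alpha> * K * b powr (- \<alpha>) * E)
      \<le> r * (\<Sum>k=2..N. (1 - b * real k powr (- r)) ^ (k - 1))"
    using K[OF b(1,2) N] r by (intro mult_left_mono) (simp_all add: E_def b(4))
  also have "\<dots> \<le> ?W"
    using sum_W_prob_threshold_ge[of r N "(1 + \<delta>) * S / real N"] r N \<delta> S b unfolding b(3) by simp
  finally have F: "r * (Gamma (\<alpha> + 1) * b powr (- \<alpha>) - (1 + 2 * \<alpha>) - \<alpha> * K * b powr (- \<alpha>) * E) \<le> ?W" .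
  have "r * Gamma (\<alpha> + 1) * b powr (- \<alpha>) = g * D"
    unfolding b_def g_def D_def \<alpha>_def using r N \<delta> S by (intro g_fun_mult_powr) auto
  with \<open>Gamma (\<alpha> + 1) > 0\<close>
  have "r * (Gamma (\<alpha> + 1) * b powr (- \<alpha>) - (1 + 2 * \<alpha>) - \<alpha> * K * b powr (- \<alpha>) * E)
      = g * D - r * (1 + 2 * \<alpha>) - \<kappa> * (g * D * E)"
    by (auto simp: \<kappa>_def field_simps)
  with F have "g * D - r * (1 + 2 * \<alpha>) - \<kappa> * (g * D * E) \<le> ?W" by simp
  moreover have "g * (1 - \<alpha> * \<delta>) \<le> g * D" "\<kappa> * (g * D * E) \<le> \<kappa> * (g * exp (- S / 2))"
  proof -
    have "g \<ge> 0" using r by (simp add: g_def g_fun_def)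
    moreover have "1 - \<alpha> * \<delta> \<le> D" "D \<le> 1" "0 \<le> D"
      using r \<delta> one_minus_mult_le_powr_neg[of \<alpha> \<delta>] powr_mono[of "- \<alpha>" 0 "1 + \<delta>"]
      by (simp_all add: D_def \<alpha>_def)
    moreover have "E \<le> exp (- S / 2)" "0 \<le> E" using \<delta> S by (simp_all add: E_def)
    moreover have "\<kappa> \<ge> 0"
      using \<open>\<alpha> > 0\<close> \<open>0 \<le> K\<close> \<open>Gamma (\<alpha> + 1) > 0\<close> by (simp add: \<kappa>_def)
    ultimately show "g * (1 - \<alpha> * \<delta>) \<le> g * D" "\<kappa> * (g * D * E) \<le> \<kappa> * (g * exp (- S / 2))"
      by (simp_all add: mult_left_mono mult_mono mult_left_le)
  qed
  ultimately show ?thesis unfolding g_def \<kappa>_def by linarith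
qed

theorem lemma4p6:
  fixes r :: real
  assumes "0 < r" and "r < 1"
  shows "\<exists>C::real. \<forall>(N::nat) (\<delta>::real) (S::real).
           N \<ge> 1 \<longrightarrow> 0 < \<delta> \<longrightarrow> \<delta> < 1/2 \<longrightarrow> 0 < S \<longrightarrow>
           S \<le> (1/3) * real N powr (1 - r) \<longrightarrow>
           (\<Sum>k=1..N. W_prob r k {w. w * (real k / real N) powr r \<ge> (1 + \<delta>) * S / real N})
             \<ge> - C + g_fun r N S * (1 - C * \<delta> - C * exp (- S / 2))"
proof -
  define \<alpha> where "\<alpha> = 1 / (1 - r)"
  obtain K where "0 \<le> K" and K: "\<And>b N. 0 < b \<Longrightarrow> b \<le> 1/2 \<Longrightarrow> N \<ge> 1 \<Longrightarrow>
      Gamma (\<alpha> + 1) * b powr (- \<alpha>) - (1 + 2 * \<alpha>) - \<alpha> * K * b powr (- \<alpha>) * exp (- (b * real N powr (1 - r)) / 2)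
        \<le> (\<Sum>k=2..N. (1 - b * real k powr (- r)) ^ (k - 1))"
    using sum_summands_lower_bound[OF assms] unfolding \<alpha>_def by blast
  define C where "C = max (r * (1 + 2 * \<alpha>)) (max \<alpha> (\<alpha> * K / Gamma (\<alpha> + 1)))"
  have "- C + g_fun r N S * (1 - C * \<delta> - C * exp (- S / 2))
      \<le> (\<Sum>k=1..N. W_prob r k {w. (1 + \<delta>) * S / real N \<le> w * (real k / real N) powr r})"
    if "N \<ge> 1" "0 < \<delta>" "\<delta> < 1/2" "0 < S" "S \<le> (1/3) * real N powr (1 - r)" for N \<delta> S
  proof -
    have "g_fun r N S * (\<alpha> * \<delta>) \<le> g_fun r N S * (C * \<delta>)"
      "\<alpha> * K / Gamma (\<alpha> + 1) * (g_fun r N S * exp (- S / 2)) \<le> C * (g_fun r N S * exp (- S / 2))"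
      using assms that by (intro mult_left_mono mult_right_mono; simp add: C_def g_fun_def)+
    moreover have "r * (1 + 2 * \<alpha>) \<le> C" by (simp add: C_def)
    ultimately show ?thesis
      using sum_W_prob_lower_bound[OF assms \<open>0 \<le> K\<close> K[unfolded \<alpha>_def] that, folded \<alpha>_def]
      by (simp add: algebra_simps)
  qed
  then show ?thesis by auto
qed

end
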